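(* Let $D,E$ be Dyck paths with Dyck words $(d_i)_{i\ge1}$ and $(e_i)_{i\ge1}$. Then $D\le E$ in the poset $(\mathcal{D},\le)$ if and only if $d_i\le e_i$ for all $i\ge1$.
   Context: A Dyck path of length $2m$ ($m\ge0$) is a lattice path from $(0,0)$ to $(2m,0)$ with steps $\nearrow=(1,1)$, $\searrow=(1,-1)$ never going below the $x$-axis; write $P(x)$ for its height at abscissa $x$. Its Dyck word is the infinite $0$-$1$ sequence obtained by replacing $\nearrow$ by $1$, $\searrow$ by $0$, and appending infinitely many $0$'s. A cell is a point $(a,b)\in\mathbb{Z}^2$ with $b\ge0$, $a+b$ even (viewed as the tilted square with vertices $(a,b),(a+1,b\pm1),(a+2,b)$). The Dyck shape of $P$ (length $2m$) is $S(P)=\{(a,b): b\ge0,\ a+b\text{ even},\ 0\le a\le 2m-2,\ b+1\le P(a+1)\}$. Cells are adjacent if they differ by $(\pm1,\pm1)$. A ribbon is a nonempty set of cells, connected for adjacency, containing no four cells $(a,b),(a+1,b+1),(a+1,b-1),(a+2,b)$. For Dyck paths $D$ of length $2m$ and $E$ of length $2m+2$, $D\sqsubset E$ means $S(D)\subseteq S(E)$ and $S(E)\setminus S(D)$ is a ribbon. $(\mathcal{D},\le)$ is the set of all Dyck paths of all lengths (including the empty path) with $\le$ the reflexive and transitive closure of $\sqsubset$. *)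

theory Defs
  imports Main
begin

text \<open>A lattice path is a list of steps; True = up step (1,1), False = down step (1,-1).\<close>

definition height :: "bool list \<Rightarrow> nat \<Rightarrow> int" where
  "height P x = (\<Sum>i<min x (length P). (if P ! i then 1 else -1))"

definition is_dyck :: "bool list \<Rightarrow> bool" where
  "is_dyck P \<longleftrightarrow> (\<forall>x\<le>length P. height P x \<ge> 0) \<and> height P (length P) = 0"

definition dyck_word :: "bool list \<Rightarrow> nat \<Rightarrow> nat" where
  "dyck_word P i = (if 1 \<le> i \<and> i \<le> length P \<and> P ! (i - 1) then 1 else 0)"

type_synonym cell = "int \<times> int"

definition dyck_shape :: "bool list \<Rightarrow> cell set" where
  "dyck_shape P = {(a, b). b \<ge> 0 \<and> even (a + b) \<and> 0 \<le> a \<and> a \<le> int (length P) - 2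
                       \<and> b + 1 \<le> height P (nat (a + 1))}"

definition adjacent :: "cell \<Rightarrow> cell \<Rightarrow> bool" where
  "adjacent c d \<longleftrightarrow> \<bar>fst c - fst d\<bar> = 1 \<and> \<bar>snd c - snd d\<bar> = 1"

definition connected_cells :: "cell set \<Rightarrow> bool" where
  "connected_cells S \<longleftrightarrow>
     (\<forall>c\<in>S. \<forall>d\<in>S. (\<lambda>x y. x \<in> S \<and> y \<in> S \<and> adjacent x y)\<^sup>*\<^sup>* c d)"

definition is_ribbon :: "cell set \<Rightarrow> bool" where
  "is_ribbon S \<longleftrightarrow> S \<noteq> {} \<and> connected_cells S \<and>
     \<not> (\<exists>a b. (a, b) \<in> S \<and> (a + 1, b + 1) \<in> S \<and> (a + 1, b - 1) \<in> S \<and> (a + 2, b) \<in> S)"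

definition cover_rel :: "bool list \<Rightarrow> bool list \<Rightarrow> bool" where
  "cover_rel D E \<longleftrightarrow> is_dyck D \<and> is_dyck E \<and> length E = length D + 2 \<and>
     dyck_shape D \<subseteq> dyck_shape E \<and> is_ribbon (dyck_shape E - dyck_shape D)"

definition dyck_le :: "bool list \<Rightarrow> bool list \<Rightarrow> bool" where
  "dyck_le D E \<longleftrightarrow> (cover_rel)\<^sup>*\<^sup>* D E"

end

theory Submission
  imports Defs
begin

text \<open>Comparing Dyck words means comparing the sets of positions of up steps. A cover
  \<open>D \<sqsubset> E\<close> never removes an up step: where \<open>D\<close> goes up and \<open>E\<close> goes down, the
  ribbon condition (no 2\<times>2 square) forces the heights to differ by exactly 2, so the two
  paths meet again one step later and the ribbon has no cell in that column; but the ribbon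
  is connected and contains a cell left of that column and the last cell of \<open>E\<close>, which
  lies right of it. Conversely, if every up step of \<open>D\<close> is one of \<open>E\<close>, turning the first
  step where only \<open>E\<close> goes up into an up step of \<open>D\<close> and appending two down steps gives a
  cover of \<open>D\<close> that is still below \<open>E\<close>; induction on the length difference finishes.\<close>

text \<open>Steps are indexed from 0 here, whereas the Dyck word is indexed from 1. The extended
  height continues the path by down steps forever, matching the trailing zeros of the
  Dyck word; it is negative beyond the end of a Dyck path.\<close>

definition up_step :: "bool list \<Rightarrow> nat \<Rightarrow> bool" where
  "up_step P i \<longleftrightarrow> i < length P \<and> P ! i"

definition ext_height :: "bool list \<Rightarrow> nat \<Rightarrow> int" where
  "ext_height P x = (\<Sum>i<x. if up_step P i then 1 else -1)"

lemma ext_height_0 [simp]: "ext_height P 0 = 0"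
  by (simp add: ext_height_def)

lemma ext_height_Suc: "ext_height P (Suc x) = ext_height P x + (if up_step P x then 1 else -1)"
  by (simp add: ext_height_def)

lemma height_eq_ext_height: "x \<le> length P \<Longrightarrow> height P x = ext_height P x"
  unfolding height_def ext_height_def up_step_def by (auto intro: sum.cong)

lemma even_ext_height_add: "even (ext_height P x + int x)"
  by (induction x) (simp_all add: ext_height_Suc)

lemma ext_height_le: "ext_height P x \<le> int x"
  by (induction x) (auto simp: ext_height_Suc)

lemma ext_height_mono: "(\<And>i. up_step A i \<Longrightarrow> up_step B i) \<Longrightarrow> ext_height A x \<le> ext_height B x"
  by (induction x) (auto simp: ext_height_Suc)

lemma ext_height_cong:
  "(\<And>i. i < x \<Longrightarrow> up_step A i = up_step B i) \<Longrightarrow> ext_height A x = ext_height B x"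
  unfolding ext_height_def by (auto intro: sum.cong)

lemma ext_height_beyond_length:
  "length P \<le> x \<Longrightarrow> ext_height P (x + k) = ext_height P x - int k"
  by (induction k) (auto simp: ext_height_Suc up_step_def)

lemma is_dyck_ext_height_nonneg: "is_dyck P \<Longrightarrow> x \<le> length P \<Longrightarrow> ext_height P x \<ge> 0"
  using height_eq_ext_height by (auto simp: is_dyck_def)

lemma is_dyck_ext_height_length: "is_dyck P \<Longrightarrow> ext_height P (length P) = 0"
  using height_eq_ext_height by (auto simp: is_dyck_def)

lemma is_dyck_ext_height_beyond: "is_dyck P \<Longrightarrow> ext_height P (length P + k) = - int k"
  using ext_height_beyond_length[of P "length P" k] is_dyck_ext_height_length by simp

lemma is_dyck_even_length: "is_dyck P \<Longrightarrow> even (length P)"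
  using even_ext_height_add[of P "length P"] is_dyck_ext_height_length by simp

lemma is_dyck_ext_height_last:
  assumes "is_dyck P" "0 < length P"
  shows "ext_height P (length P - 1) = 1"
proof -
  obtain L where L: "length P = Suc L"
    using assms(2) by (cases "length P") auto
  have "ext_height P (Suc L) = 0" "ext_height P L \<ge> 0"
    using is_dyck_ext_height_length[OF assms(1)] is_dyck_ext_height_nonneg[OF assms(1), of L] L
    by auto
  then show ?thesis
    using L by (auto simp: ext_height_Suc split: if_splits)
qed

lemma is_dyck_length_mono:
  assumes "is_dyck A" "is_dyck B" "\<And>i. up_step A i \<Longrightarrow> up_step B i"
  shows "length A \<le> length B"
proof (rule ccontr)
  assume "\<not> length A \<le> length B"
  then have "0 \<le> ext_height A (Suc (length B))"
    using assms(1) is_dyck_ext_height_nonneg by simp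
  also have "\<dots> \<le> ext_height B (Suc (length B))"
    using assms(3) by (rule ext_height_mono)
  also have "\<dots> = -1"
    using assms(2) is_dyck_ext_height_length by (simp add: ext_height_Suc up_step_def)
  finally show False by simp
qed

lemma up_step_eqI: "(\<And>i. up_step A i = up_step B i) \<Longrightarrow> length A = length B \<Longrightarrow> A = B"
  by (rule nth_equalityI) (auto simp: up_step_def)

lemma dyck_word_Suc: "dyck_word P (Suc i) = (if up_step P i then 1 else 0)"
  by (simp add: dyck_word_def up_step_def Suc_le_eq)

lemma nat_of_nat_add_one [simp]: "nat (int x + 1) = Suc x"
  by simp


lemma nat_numeral_add_of_nat [simp]: "nat (numeral k + int x) = numeral k + x"
  by (simp add: nat_add_distrib)

lemma mem_dyck_shape:
  "(a, b) \<in> dyck_shape P \<longleftrightarrow>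
     b \<ge> 0 \<and> even (a + b) \<and> 0 \<le> a \<and> a \<le> int (length P) - 2 \<and> b + 1 \<le> height P (nat (a + 1))"
  by (simp add: dyck_shape_def)

lemma rtranclp_crosses_column:
  fixes c d :: "int \<times> 'b"
  assumes "R\<^sup>*\<^sup>* c d" and "\<And>x y. R x y \<Longrightarrow> y \<in> S \<and> \<bar>fst x - fst y\<bar> = 1"
    and "c \<in> S" "fst c \<le> k" "k \<le> fst d"
  shows "\<exists>e\<in>S. fst e = k"
  using assms(1,5)
proof (induction rule: rtranclp_induct)
  case base
  then show ?case using assms(3,4) by (metis order_antisym)
next
  case (step y z)
  show ?case
  proof (cases "k \<le> fst y")
    case True
    then show ?thesis using step by auto
  next
    case False
    then show ?thesis using step.hyps(2) step.prems assms(2)[of y z] by force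
  qed
qed

lemma ext_height_le_if_dyck_shape_subset:
  assumes dD: "is_dyck D" and dE: "is_dyck E" and sub: "dyck_shape D \<subseteq> dyck_shape E"
    and len: "length D \<le> length E" and x: "x \<le> length D"
  shows "ext_height D x \<le> ext_height E x"
proof (cases "ext_height D x \<le> 0")
  case True
  then show ?thesis using is_dyck_ext_height_nonneg[OF dE, of x] x len by simp
next
  case False
  then have "x \<noteq> 0" "x \<noteq> length D"
    using is_dyck_ext_height_length[OF dD] by (metis ext_height_0 order_refl)+
  moreover have "even (int x - 1 + (ext_height D x - 1))"
    using even_ext_height_add[of D x] by presburger
  ultimately have "(int x - 1, ext_height D x - 1) \<in> dyck_shape D"
    using False x height_eq_ext_height[OF x] by (auto simp: mem_dyck_shape)
  with sub have "(int x - 1, ext_height D x - 1) \<in> dyck_shape E" by blast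
  then show ?thesis using height_eq_ext_height[of x E] x len by (auto simp: mem_dyck_shape)
qed

text \<open>A larger gap would put a 2\<times>2 square of cells into the ribbon.\<close>

lemma cover_rel_ext_height_gap:
  assumes cv: "cover_rel D E" and upD: "up_step D i" and downE: "\<not> up_step E i"
  shows "ext_height E i = ext_height D i + 2"
proof -
  define n where "n = length D"
  let ?S = "dyck_shape E - dyck_shape D"
  have dD: "is_dyck D" and dE: "is_dyck E" and lenE: "length E = n + 2"
    and rib: "is_ribbon ?S"
    using cv by (auto simp: cover_rel_def n_def)
  have iN: "i < n" using upD by (simp add: up_step_def n_def)
  have hD: "height D x = ext_height D x" if "x \<le> n" for x
    using that height_eq_ext_height n_def by simp
  have hE: "height E x = ext_height E x" if "x \<le> n + 2" for x
    using that height_eq_ext_height lenE by simp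
  have sD: "ext_height D (Suc i) = ext_height D i + 1"
    and sE: "ext_height E (Suc i) = ext_height E i - 1"
    using upD downE by (simp_all add: ext_height_Suc)
  have "ext_height D (Suc i) \<le> ext_height E (Suc i)"
    using ext_height_le_if_dyck_shape_subset[OF dD dE] cv iN
    by (simp add: cover_rel_def n_def)
  moreover have "even (ext_height E i - ext_height D i)"
    using even_ext_height_add[of D i] even_ext_height_add[of E i] by presburger
  moreover have Dpos: "ext_height D i \<ge> 0"
    using is_dyck_ext_height_nonneg[OF dD] iN n_def by simp
  moreover have "\<not> ext_height E i \<ge> ext_height D i + 4"
  proof
    assume gap: "ext_height E i \<ge> ext_height D i + 4"
    then obtain j where ij: "i = Suc j" and j1: "j \<ge> 1"
      using ext_height_le[of E i] Dpos by (cases i) auto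
    have "ext_height D j \<le> ext_height D i + 1" "ext_height E j \<ge> ext_height E i - 1"
      using ext_height_Suc[of D j] ext_height_Suc[of E j] ij by (auto split: if_splits)
    moreover define b where "b = ext_height D i + 2"
    moreover have "even (int j - 1 + b)"
      using even_ext_height_add[of D i] ij by (simp add: b_def)
    ultimately have "(int j - 1, b) \<in> ?S" "(int j - 1 + 1, b + 1) \<in> ?S"
      "(int j - 1 + 1, b - 1) \<in> ?S" "(int j - 1 + 2, b) \<in> ?S"
      using j1 gap Dpos iN ij sD sE hE[of j] hD[of j] hE[of i] hD[of i]
        hE[of "Suc i"] hD[of "Suc i"]
      by (auto simp: mem_dyck_shape lenE)
    then show False using rib unfolding is_ribbon_def by blast
  qed
  ultimately show ?thesis using sD sE by presburger
qed

lemma cell_in_dyck_shape_if_ext_height_le: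
  assumes cell: "(int k, b) \<in> dyck_shape E" and dD: "is_dyck D"
    and le: "ext_height E (Suc k) \<le> ext_height D (Suc k)"
    and k: "Suc k \<le> length D" and len: "length D \<le> length E"
  shows "(int k, b) \<in> dyck_shape D"
proof -
  have "0 \<le> b" "even (int k + b)" "b + 1 \<le> ext_height E (Suc k)"
    using cell height_eq_ext_height[of "Suc k" E] k len by (auto simp: mem_dyck_shape)
  moreover have "Suc k \<noteq> length D"
    using calculation le is_dyck_ext_height_length[OF dD] by auto
  ultimately show ?thesis
    using le k height_eq_ext_height[of "Suc k" D] by (auto simp: mem_dyck_shape)
qed

text \<open>The last cell of the longer path is in the ribbon, and connectivity lets the
  ribbon reach it through cells in every intermediate column.\<close>

lemma cover_rel_skew_shape_meets_column:
  assumes cv: "cover_rel D E" and c: "c \<in> dyck_shape E - dyck_shape D"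
    and "fst c \<le> k" "k \<le> int (length D)"
  shows "\<exists>b. (k, b) \<in> dyck_shape E - dyck_shape D"
proof -
  define n where "n = length D"
  let ?S = "dyck_shape E - dyck_shape D"
  have dD: "is_dyck D" and dE: "is_dyck E" and lenE: "length E = n + 2"
    and rib: "is_ribbon ?S"
    using cv by (auto simp: cover_rel_def n_def)
  have "height E (n + 1) = 1"
    using is_dyck_ext_height_last[OF dE] height_eq_ext_height[of "n + 1" E] lenE by simp
  then have d: "(int n, 0) \<in> ?S"
    using is_dyck_even_length[OF dD] by (auto simp: mem_dyck_shape lenE n_def)
  have "(\<lambda>x y. x \<in> ?S \<and> y \<in> ?S \<and> adjacent x y)\<^sup>*\<^sup>* c (int n, 0)"
    using rib c d by (auto simp: is_ribbon_def connected_cells_def)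
  from rtranclp_crosses_column[OF this, of ?S k] c assms(3,4)
  obtain e where "e \<in> ?S" "fst e = k"
    by (auto simp: adjacent_def n_def)
  then show ?thesis by (metis prod.collapse)
qed

lemma cover_rel_up_step:
  assumes cv: "cover_rel D E" and upD: "up_step D i"
  shows "up_step E i"
proof (rule ccontr)
  assume downE: "\<not> up_step E i"
  define n where "n = length D"
  let ?S = "dyck_shape E - dyck_shape D"
  have dD: "is_dyck D" and lenE: "length E = n + 2"
    using cv by (auto simp: cover_rel_def n_def)
  have iN: "i < n" using upD by (simp add: up_step_def n_def)
  have gap: "ext_height E i = ext_height D i + 2"
    using cover_rel_ext_height_gap[OF cv upD downE] .
  have Dpos: "ext_height D i \<ge> 0"
    using is_dyck_ext_height_nonneg[OF dD] iN n_def by simp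
  then have i1: "i \<ge> 1" using gap ext_height_le[of E i] by linarith
  have "even (int i - 1 + (ext_height D i + 1))"
    using even_ext_height_add[of D i] by presburger
  then have "(int i - 1, ext_height D i + 1) \<in> ?S"
    using i1 iN Dpos gap height_eq_ext_height[of i E] height_eq_ext_height[of i D] lenE
    by (auto simp: mem_dyck_shape n_def)
  then obtain b where b: "(int i, b) \<in> ?S"
    using cover_rel_skew_shape_meets_column[OF cv] iN n_def by fastforce
  have "ext_height E (Suc i) = ext_height D (Suc i)"
    using gap upD downE by (simp add: ext_height_Suc)
  then have "(int i, b) \<in> dyck_shape D"
    using b cell_in_dyck_shape_if_ext_height_le[of i b E D] dD iN lenE n_def by simp
  then show False using b by simp
qed

text \<open>Turning the down step \<open>p\<close> of \<open>D\<close> into an up step and appending two down steps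
  raises the path by 2 to the right of \<open>p\<close>; the new cells form a ribbon hugging the
  raised path.\<close>

definition lift_at :: "bool list \<Rightarrow> nat \<Rightarrow> bool list" where
  "lift_at D p = (D @ [False, False])[p := True]"

lemma length_lift_at [simp]: "length (lift_at D p) = length D + 2"
  by (simp add: lift_at_def)

context
  fixes D :: "bool list" and p :: nat
  assumes dyck: "is_dyck D" and p_le: "p \<le> length D" and down: "\<not> up_step D p"
begin

lemma up_step_lift_at: "up_step (lift_at D p) i \<longleftrightarrow> up_step D i \<or> i = p"
proof -
  have "p < length (D @ [False, False])" using p_le by simp
  then show ?thesis
    by (auto simp: lift_at_def up_step_def nth_append nth_list_update less_Suc_eq)
qed

lemma ext_height_lift_at:
  "ext_height (lift_at D p) x = ext_height D x + (if p < x then 2 else 0)"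
  by (induction x) (use down in \<open>auto simp: ext_height_Suc up_step_lift_at less_Suc_eq\<close>)

lemmas ext_height_beyond_dyck =
  is_dyck_ext_height_beyond[OF dyck, of 1, simplified]
  is_dyck_ext_height_beyond[OF dyck, of 2, simplified]

lemma is_dyck_lift_at: "is_dyck (lift_at D p)"
proof -
  have "ext_height (lift_at D p) x \<ge> 0" if "x \<le> length D + 2" for x
  proof (cases "x \<le> length D")
    case True
    then show ?thesis
      using is_dyck_ext_height_nonneg[OF dyck] ext_height_lift_at[of x] by simp
  next
    case False
    then have "x = length D + 1 \<or> x = length D + 2" using that by auto
    then show ?thesis using ext_height_lift_at[of x] ext_height_beyond_dyck p_le by auto
  qed
  then show ?thesis
    unfolding is_dyck_def
    using height_eq_ext_height ext_height_lift_at ext_height_beyond_dyck p_le by auto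
qed

lemma dyck_shape_subset_lift_at: "dyck_shape D \<subseteq> dyck_shape (lift_at D p)"
proof safe
  fix a b assume ab: "(a, b) \<in> dyck_shape D"
  then have "nat (a + 1) \<le> length D" by (auto simp: mem_dyck_shape)
  then have "height D (nat (a + 1)) \<le> height (lift_at D p) (nat (a + 1))"
    using height_eq_ext_height ext_height_lift_at by simp
  then show "(a, b) \<in> dyck_shape (lift_at D p)"
    using ab by (auto simp: mem_dyck_shape)
qed

text \<open>Each column of the skew shape holds exactly one cell, the one touching the raised
  path from below.\<close>

lemma skew_shape_lift_at_cell:
  assumes ab: "(a, b) \<in> dyck_shape (lift_at D p) - dyck_shape D"
  shows "0 \<le> a \<and> a \<le> int (length D) \<and> b + 1 = ext_height (lift_at D p) (nat (a + 1))
    \<and> ext_height D (nat (a + 1)) < b + 1"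
proof -
  define n where "n = length D"
  define x where "x = nat (a + 1)"
  have a0: "0 \<le> a" and an: "a \<le> int n" and b0: "b \<ge> 0" and evab: "even (a + b)"
    and bF: "b + 1 \<le> height (lift_at D p) x"
    using ab by (auto simp: mem_dyck_shape x_def n_def)
  have ax: "a = int x - 1" using a0 x_def by simp
  have xn: "x \<le> n + 1" using an ax by simp
  have bF': "b + 1 \<le> ext_height (lift_at D p) x"
    using bF height_eq_ext_height[of x "lift_at D p"] xn n_def by simp
  have gtD: "ext_height D x < b + 1"
  proof -
    consider "x < n" | "x = n" | "x = n + 1" using xn by linarith
    then show ?thesis
    proof cases
      case 1
      then have "a \<le> int (length D) - 2" using ax n_def by simp
      then have "\<not> b + 1 \<le> height D (nat (a + 1))"
        using ab b0 evab a0 by (auto simp: mem_dyck_shape)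
      then show ?thesis using height_eq_ext_height[of x D] 1 n_def by (simp add: x_def)
    next
      case 2
      then show ?thesis using is_dyck_ext_height_length[OF dyck] n_def b0 by simp
    next
      case 3
      then show ?thesis using ext_height_beyond_dyck n_def b0 by simp
    qed
  qed
  have "ext_height (lift_at D p) x \<le> ext_height D x + 2"
    using ext_height_lift_at[of x] by simp
  moreover have "even (ext_height (lift_at D p) x - (b + 1))"
    using even_ext_height_add[of "lift_at D p" x] evab ax by presburger
  ultimately have "b + 1 = ext_height (lift_at D p) x" using gtD bF' by presburger
  then show ?thesis using a0 an gtD x_def n_def by simp
qed

lemma skew_shape_lift_at_successor:
  assumes ab: "(a, b) \<in> dyck_shape (lift_at D p) - dyck_shape D" and a: "a < int (length D)"
  shows "\<exists>b'. (a + 1, b') \<in> dyck_shape (lift_at D p) - dyck_shape D \<and> adjacent (a, b) (a + 1, b')"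
proof -
  define n where "n = length D"
  define x where "x = nat (a + 1)"
  have K: "0 \<le> a" "b + 1 = ext_height (lift_at D p) x" "ext_height D x < b + 1"
    using skew_shape_lift_at_cell[OF ab] x_def by auto
  have ax: "a = int x - 1" and xn: "x \<le> n" using K a x_def n_def by auto
  have "p < x" using K ext_height_lift_at[of x] by (cases "p < x") auto
  then have hx1: "ext_height (lift_at D p) (Suc x) = ext_height D (Suc x) + 2"
    using ext_height_lift_at[of "Suc x"] by simp
  have hx1': "ext_height D (Suc x) \<ge> -1"
    using is_dyck_ext_height_nonneg[OF dyck, of "Suc x"] ext_height_beyond_dyck xn n_def
    by (cases "x = n") auto
  define b' where "b' = ext_height (lift_at D p) (Suc x) - 1"
  have "even (a + 1 + b')"
    using even_ext_height_add[of "lift_at D p" "Suc x"] ax by (simp add: b'_def)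
  then have "(a + 1, b') \<in> dyck_shape (lift_at D p)"
    using K xn hx1 hx1' height_eq_ext_height[of "Suc x" "lift_at D p"] ax
    by (auto simp: b'_def mem_dyck_shape n_def)
  moreover have "(a + 1, b') \<notin> dyck_shape D"
    using hx1 height_eq_ext_height[of "Suc x" D] ax by (auto simp: b'_def mem_dyck_shape)
  moreover have "adjacent (a, b) (a + 1, b')"
    using K ext_height_Suc[of "lift_at D p" x] by (auto simp: adjacent_def b'_def)
  ultimately show ?thesis by blast
qed

lemma ext_height_lift_at_end: "ext_height (lift_at D p) (length D + 1) = 1"
  using ext_height_lift_at[of "length D + 1"] ext_height_beyond_dyck p_le by simp

lemma end_cell_in_skew_shape_lift_at:
  "(int (length D), 0) \<in> dyck_shape (lift_at D p) - dyck_shape D"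
  using ext_height_lift_at_end height_eq_ext_height[of "length D + 1" "lift_at D p"]
    is_dyck_even_length[OF dyck]
  by (auto simp: mem_dyck_shape)

lemma skew_shape_lift_at_reaches_end:
  assumes "(a, b) \<in> dyck_shape (lift_at D p) - dyck_shape D"
  shows "(\<lambda>x y. x \<in> dyck_shape (lift_at D p) - dyck_shape D
            \<and> y \<in> dyck_shape (lift_at D p) - dyck_shape D \<and> adjacent x y)\<^sup>*\<^sup>*
         (a, b) (int (length D), 0)"
    (is "?R\<^sup>*\<^sup>* _ _")
  using assms
proof (induction "nat (int (length D) - a)" arbitrary: a b)
  case 0
  from skew_shape_lift_at_cell[OF 0(2)]
  have "a \<le> int (length D)" and b: "b + 1 = ext_height (lift_at D p) (nat (a + 1))"
    by blast+
  with 0(1) have "a = int (length D)" by simp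
  with b have "b = 0"
    using ext_height_lift_at_end by simp
  with \<open>a = int (length D)\<close> show ?case by simp
next
  case (Suc k)
  have "a < int (length D)" using Suc(2) by linarith
  then obtain b' where b': "(a + 1, b') \<in> dyck_shape (lift_at D p) - dyck_shape D"
    "adjacent (a, b) (a + 1, b')"
    using skew_shape_lift_at_successor[OF Suc(3)] by blast
  have "k = nat (int (length D) - (a + 1))" using Suc(2) by simp
  from Suc(1)[OF this b'(1)] have "?R\<^sup>*\<^sup>* (a + 1, b') (int (length D), 0)" .
  moreover have "?R (a, b) (a + 1, b')"
    using b' Suc(3) by blast
  ultimately show ?case
    by (rule converse_rtranclp_into_rtranclp[rotated])
qed

lemma is_ribbon_skew_shape_lift_at: "is_ribbon (dyck_shape (lift_at D p) - dyck_shape D)"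
proof -
  let ?S = "dyck_shape (lift_at D p) - dyck_shape D"
  define R where "R = (\<lambda>x y. x \<in> ?S \<and> y \<in> ?S \<and> adjacent x y)"
  have "symp R\<^sup>*\<^sup>*"
    by (rule symp_rtranclp) (auto simp: symp_def R_def adjacent_def)
  have "R\<^sup>*\<^sup>* c d" if "c \<in> ?S" "d \<in> ?S" for c d
  proof -
    have "R\<^sup>*\<^sup>* c (int (length D), 0)" "R\<^sup>*\<^sup>* d (int (length D), 0)"
      using skew_shape_lift_at_reaches_end[of "fst c" "snd c"]
        skew_shape_lift_at_reaches_end[of "fst d" "snd d"] that
      unfolding R_def by simp_all
    then show ?thesis
      using \<open>symp R\<^sup>*\<^sup>*\<close> by (meson rtranclp_trans sympD)
  qed
  then have "connected_cells ?S"
    unfolding connected_cells_def R_def by blast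
  moreover have "\<not> ((a + 1, b + 1) \<in> ?S \<and> (a + 1, b - 1) \<in> ?S)" for a b
  proof
    assume "(a + 1, b + 1) \<in> ?S \<and> (a + 1, b - 1) \<in> ?S"
    then have "b + 1 = b - 1"
      using skew_shape_lift_at_cell[of "a + 1" "b + 1"] skew_shape_lift_at_cell[of "a + 1" "b - 1"]
      by simp
    then show False by simp
  qed
  ultimately show ?thesis
    using end_cell_in_skew_shape_lift_at unfolding is_ribbon_def by blast
qed

lemma cover_rel_lift_at: "cover_rel D (lift_at D p)"
  unfolding cover_rel_def
  using dyck is_dyck_lift_at dyck_shape_subset_lift_at is_ribbon_skew_shape_lift_at
  by (simp only: length_lift_at simp_thms)

end

lemma dyck_le_up_step: "dyck_le D E \<Longrightarrow> up_step D i \<Longrightarrow> up_step E i"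
  unfolding dyck_le_def
  by (induction rule: rtranclp_induct) (auto intro: cover_rel_up_step)

lemma first_difference_le_length:
  assumes dD: "is_dyck D" and dE: "is_dyck E" and upE: "up_step E p"
    and agree: "\<And>i. i < p \<Longrightarrow> up_step D i \<longleftrightarrow> up_step E i"
  shows "p \<le> length D"
proof (rule ccontr)
  assume "\<not> p \<le> length D"
  then have "ext_height E (length D + 1) = ext_height D (length D + 1)"
    using agree by (intro ext_height_cong) auto
  also have "\<dots> = -1"
    using is_dyck_ext_height_beyond[OF dD, of 1] by simp
  finally show False
    using is_dyck_ext_height_nonneg[OF dE, of "length D + 1"] upE \<open>\<not> p \<le> length D\<close>
    by (simp add: up_step_def)
qed

lemma dyck_le_if_up_step_subset:
  assumes "is_dyck D" "is_dyck E" "\<And>i. up_step D i \<Longrightarrow> up_step E i"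
  shows "dyck_le D E"
  using assms
proof (induction "length E - length D" arbitrary: D rule: less_induct)
  case less
  show ?case
  proof (cases "\<forall>i. up_step E i \<longrightarrow> up_step D i")
    case True
    then have "\<And>i. up_step D i = up_step E i" using less.prems by blast
    moreover have "length D = length E"
      using is_dyck_length_mono less.prems calculation by (metis le_antisym)
    ultimately have "D = E" by (rule up_step_eqI)
    then show ?thesis by (simp add: dyck_le_def)
  next
    case False
    define p where "p = (LEAST q. up_step E q \<and> \<not> up_step D q)"
    have p: "up_step E p" "\<not> up_step D p"
      using False LeastI_ex[of "\<lambda>q. up_step E q \<and> \<not> up_step D q"] by (auto simp: p_def)
    have "up_step D i \<longleftrightarrow> up_step E i" if "i < p" for i
      using not_less_Least[of i "\<lambda>q. up_step E q \<and> \<not> up_step D q"] that less.prems(3)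
      by (auto simp: p_def)
    then have p_le: "p \<le> length D"
      using first_difference_le_length less.prems(1,2) p by blast
    define F where "F = lift_at D p"
    have cover: "cover_rel D F" and dF: "is_dyck F"
      using cover_rel_lift_at is_dyck_lift_at less.prems(1) p_le p(2) by (auto simp: F_def)
    have upF: "up_step F i \<Longrightarrow> up_step E i" for i
      using up_step_lift_at[OF less.prems(1) p_le p(2)] less.prems(3) p(1) by (auto simp: F_def)
    then have "length F \<le> length E"
      using is_dyck_length_mono dF less.prems(2) by blast
    then have "dyck_le F E"
      using less.hyps dF less.prems(2) upF by (simp add: F_def)
    then show ?thesis
      using cover unfolding dyck_le_def by (meson converse_rtranclp_into_rtranclp)
  qed
qed

lemma dyck_word_le_iff_up_step_imp:
  "(\<forall>i\<ge>1. dyck_word D i \<le> dyck_word E i) \<longleftrightarrow> (\<forall>i. up_step D i \<longrightarrow> up_step E i)"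
proof -
  have "(\<forall>i\<ge>1. dyck_word D i \<le> dyck_word E i) \<longleftrightarrow> (\<forall>i. dyck_word D (Suc i) \<le> dyck_word E (Suc i))"
    by (metis Suc_le_D Suc_le_mono le0 One_nat_def)
  then show ?thesis by (simp add: dyck_word_Suc)
qed

theorem mainTheorem4:
  assumes "is_dyck D" and "is_dyck E"
  shows "dyck_le D E \<longleftrightarrow> (\<forall>i\<ge>1. dyck_word D i \<le> dyck_word E i)"
  unfolding dyck_word_le_iff_up_step_imp
  using assms dyck_le_up_step dyck_le_if_up_step_subset by blast

end
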